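(* Let $\mathcal{U}$ and $\mathcal{C}$ be finite-dimensional vector spaces over a common finite field, let $\Theta:\mathcal{U}\to\mathcal{S}_=(\mathcal{H}_{Y_{[1:L]}})$, $u\mapsto\rho^u_{Y_{[1:L]}}$, be a classical-quantum channel, and let $\mathbb{A}\subseteq2^{[1:L]}$. Let $U\sim\tilde P_U$ with $\mathbb{V}(\tilde P_U,P^U_U)\le\epsilon'$, where $P^U_U$ is uniform on $\mathcal{U}$. Suppose there is a source code for $U$ with compound quantum side information $(\rho^U_{Y_{\mathcal{A}}})_{\mathcal{A}\in\mathbb{A}}$ consisting of a linear encoder $g:\mathcal{U}\to\mathcal{C}$ and decoders $h_{\mathcal{A}}$ ($\mathcal{A}\in\mathbb{A}$), each of which given $c\in\mathcal{C}$ performs a measurement on $\mathcal{H}_{Y_{\mathcal{A}}}$ with outcomes in $\mathcal{U}$, such that $\max_{\mathcal{A}\in\mathbb{A}}\Pr_{U\sim\tilde P_U}[h_{\mathcal{A}}(\rho^U_{Y_{\mathcal{A}}},g(U))\ne U]\le\epsilon''$. Then, for a secret set $\mathcal{S}$ with $|\mathcal{S}|=|\mathcal{U}|/|\mathcal{C}|$ and $S$ uniform on $\mathcal{S}$, there exist encoders $\mathsf{Enc}_c:\mathcal{S}\to\mathcal{U}$ and decoding measurements $\mathsf{Dec}_{c,\mathcal{A}}$ on $\mathcal{H}_{Y_{\mathcal{A}}}$ with outcomes in $\mathcal{S}$, for $c\in\mathcal{C}$, $\mathcal{A}\in\mathbb{A}$, such that $$\max_{\mathcal{A}\in\mathbb{A}}\sum_{c\in\mathcal{C}}\frac1{|\mathcal{C}|}\bar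 P^{c,\mathcal{A}}_e\le\epsilon'+\epsilon'',\qquad \bar P^{c,\mathcal{A}}_e=\mathbb{E}_S\Big[\Pr\big[\mathsf{Dec}_{c,\mathcal{A}}(\rho^{\mathsf{Enc}_c(S)}_{Y_{\mathcal{A}}})\ne S\big]\Big].$$
   Context: $\mathcal{H}_{Y_{[1:L]}}=\mathcal{H}_{Y_1}\otimes\cdots\otimes\mathcal{H}_{Y_L}$ (finite-dimensional), $\mathcal{S}_=(\mathcal{H})$ is the set of density operators, and $\rho^u_{Y_{\mathcal{A}}}$ is the reduced state on $Y_l$, $l\in\mathcal{A}$. The variational distance is $\mathbb{V}(p,q)=\sum_x|p(x)-q(x)|$. *)

theory Defs
  imports "HOL-Analysis.Analysis"
begin

text \<open>Composite quantum system Y_1 ... Y_L, subsystem l has dimension d l.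
  Basis vectors of H_{Y_A} are indexed by functions x in PiE A (lambda l. {..<d l}).
  Operators on H_{Y_A} are complex-valued kernels on these indices.\<close>

type_synonym idx = "nat \<Rightarrow> nat"
type_synonym qop = "idx \<Rightarrow> idx \<Rightarrow> complex"

definition qbasis :: "(nat \<Rightarrow> nat) \<Rightarrow> nat set \<Rightarrow> idx set" where
  "qbasis d A = PiE A (\<lambda>l. {..<d l})"

definition qpsd :: "(nat \<Rightarrow> nat) \<Rightarrow> nat set \<Rightarrow> qop \<Rightarrow> bool" where
  "qpsd d A M \<longleftrightarrow> (\<forall>v :: idx \<Rightarrow> complex.
     let q = (\<Sum>x\<in>qbasis d A. \<Sum>y\<in>qbasis d A. cnj (v x) * M x y * v y)
     in Im q = 0 \<and> Re q \<ge> 0)"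

definition qtrace :: "(nat \<Rightarrow> nat) \<Rightarrow> nat set \<Rightarrow> qop \<Rightarrow> complex" where
  "qtrace d A M = (\<Sum>x\<in>qbasis d A. M x x)"

definition density :: "(nat \<Rightarrow> nat) \<Rightarrow> nat set \<Rightarrow> qop \<Rightarrow> bool" where
  "density d A \<rho> \<longleftrightarrow> qpsd d A \<rho> \<and> qtrace d A \<rho> = 1"

definition reduced :: "(nat \<Rightarrow> nat) \<Rightarrow> nat \<Rightarrow> nat set \<Rightarrow> qop \<Rightarrow> qop" where
  "reduced d L A \<rho> = (\<lambda>x y. \<Sum>z\<in>qbasis d ({1..L} - A).
      \<rho> (\<lambda>l. if l \<in> A then x l else z l) (\<lambda>l. if l \<in> A then y l else z l))"

definition povm :: "(nat \<Rightarrow> nat) \<Rightarrow> nat set \<Rightarrow> 'x set \<Rightarrow> ('x \<Rightarrow> qop) \<Rightarrow> bool" where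
  "povm d A X M \<longleftrightarrow> finite X \<and> (\<forall>x\<in>X. qpsd d A (M x)) \<and>
     (\<forall>a\<in>qbasis d A. \<forall>b\<in>qbasis d A. (\<Sum>x\<in>X. M x a b) = (if a = b then 1 else 0))"

definition qprob :: "(nat \<Rightarrow> nat) \<Rightarrow> nat set \<Rightarrow> qop \<Rightarrow> qop \<Rightarrow> real" where
  "qprob d A M \<rho> = Re (\<Sum>a\<in>qbasis d A. \<Sum>b\<in>qbasis d A. M a b * \<rho> b a)"

definition vdist :: "('a::finite \<Rightarrow> real) \<Rightarrow> ('a \<Rightarrow> real) \<Rightarrow> real" where
  "vdist p q = (\<Sum>x\<in>UNIV. \<bar>p x - q x\<bar>)"

end

theory Submission
  imports Defs
begin

(*
  Split the message space U into |C| blocks of |S| elements, each lying inside one fibre of g: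
  the fibres of the linear map g are the cosets of its kernel, and |range g| divides |C|, so
  every fibre has a multiple of |S| elements. For the public value c, the message s is sent as
  the s-th element B (c, s) of block c. The decoder runs the measurement of h_A with syndrome
  g (B (c, s)) and reports the position of the outcome inside its block; this classical
  relabelling of the outcomes errs only if h_A does. Averaging over uniform (c, s) is averaging
  over uniform u, which differs from averaging under P by at most the variational distance.
*)

section \<open>Positive semidefinite kernels\<close>

definition sesq :: "'a set \<Rightarrow> ('a \<Rightarrow> 'a \<Rightarrow> complex) \<Rightarrow> ('a \<Rightarrow> complex) \<Rightarrow> ('a \<Rightarrow> complex) \<Rightarrow> complex" where
  "sesq X M u v = (\<Sum>x\<in>X. \<Sum>y\<in>X. cnj (u x) * M x y * v y)"

definition psd_on :: "'a set \<Rightarrow> ('a \<Rightarrow> 'a \<Rightarrow> complex) \<Rightarrow> bool" where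
  "psd_on X M \<longleftrightarrow> (\<forall>v. Im (sesq X M v v) = 0 \<and> Re (sesq X M v v) \<ge> 0)"

definition ket :: "'a \<Rightarrow> 'a \<Rightarrow> complex" where
  "ket x = (\<lambda>y. if y = x then 1 else 0)"

lemma qpsd_iff_psd_on: "qpsd d A M \<longleftrightarrow> psd_on (qbasis d A) M"
  by (simp add: qpsd_def psd_on_def sesq_def)

lemma sesq_add_scaled:
  "sesq X M (\<lambda>y. u y + t * w y) (\<lambda>y. u y + t * w y) =
     sesq X M u u + t * sesq X M u w + cnj t * sesq X M w u + cnj t * t * sesq X M w w"
proof -
  have "cnj (u x + t * w x) * M x y * (u y + t * w y) =
     cnj (u x) * M x y * u y + t * (cnj (u x) * M x y * w y) + cnj t * (cnj (w x) * M x y * u y)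
       + cnj t * t * (cnj (w x) * M x y * w y)" for x y
    by (simp add: algebra_simps)
  then show ?thesis
    unfolding sesq_def by (simp add: sum.distrib sum_distrib_left)
qed

lemma sesq_ket_right: "finite X \<Longrightarrow> x \<in> X \<Longrightarrow> sesq X M u (ket x) = (\<Sum>a\<in>X. cnj (u a) * M a x)"
  unfolding sesq_def ket_def by (simp add: if_distrib cong: if_cong)

lemma sesq_ket_left: "finite X \<Longrightarrow> x \<in> X \<Longrightarrow> sesq X M (ket x) v = (\<Sum>b\<in>X. M x b * v b)"
  unfolding sesq_def ket_def by (simp add: if_distrib if_distribR sum.If_cases)

lemma sesq_ket_ket: "finite X \<Longrightarrow> a \<in> X \<Longrightarrow> b \<in> X \<Longrightarrow> sesq X M (ket a) (ket b) = M a b"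
  by (simp add: sesq_ket_left) (simp add: ket_def if_distrib cong: if_cong)

lemma psd_on_sum:
  assumes "\<And>u. u \<in> T \<Longrightarrow> psd_on X (H u)"
  shows "psd_on X (\<lambda>a b. \<Sum>u\<in>T. H u a b)"
proof -
  have "sesq X (\<lambda>a b. \<Sum>u\<in>T. H u a b) v v = (\<Sum>u\<in>T. sesq X (H u) v v)" for v
    unfolding sesq_def by (simp add: sum_distrib_left sum_distrib_right sum.swap[of _ T])
  then show ?thesis
    using assms unfolding psd_on_def by (simp add: Im_sum Re_sum sum_nonneg)
qed

lemma psd_on_diag:
  "psd_on X M \<Longrightarrow> finite X \<Longrightarrow> a \<in> X \<Longrightarrow> Im (M a a) = 0 \<and> Re (M a a) \<ge> 0"
  using sesq_ket_ket[of X a a M] unfolding psd_on_def by metis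

lemma psd_on_hermitian:
  assumes psd: "psd_on X M" and X: "finite X" "a \<in> X" "b \<in> X"
  shows "M a b = cnj (M b a)"
proof -
  have expand: "sesq X M (\<lambda>y. ket a y + t * ket b y) (\<lambda>y. ket a y + t * ket b y) =
      M a a + t * M a b + cnj t * M b a + cnj t * t * M b b" for t
    using sesq_add_scaled[of X M "ket a" t "ket b"] sesq_ket_ket[OF X(1)] X by simp
  have real: "Im (sesq X M v v) = 0" for v
    using psd unfolding psd_on_def by blast
  have "Im (M a a) = 0" "Im (M b b) = 0"
    using psd_on_diag[OF psd X(1)] X by auto
  with real[of "\<lambda>y. ket a y + 1 * ket b y"] real[of "\<lambda>y. ket a y + \<i> * ket b y"]
  show ?thesis
    unfolding expand by (intro complex_eqI) auto
qed

lemma psd_on_reindex: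
  fixes \<iota> :: "'b \<Rightarrow> 'a"
  assumes psd: "psd_on X M" and fin: "finite X" and inj: "inj_on \<iota> Y" and sub: "\<iota> ` Y \<subseteq> X"
  shows "psd_on Y (\<lambda>a b. M (\<iota> a) (\<iota> b))"
  unfolding psd_on_def
proof
  fix v :: "'b \<Rightarrow> complex"
  define w where "w x = (if x \<in> \<iota> ` Y then v (inv_into Y \<iota> x) else 0)" for x
  have "sesq X M w w = (\<Sum>x\<in>\<iota> ` Y. \<Sum>y\<in>X. cnj (w x) * M x y * w y)"
    unfolding sesq_def using fin sub by (intro sum.mono_neutral_right) (auto simp: w_def)
  also have "\<dots> = sesq (\<iota> ` Y) M w w"
    unfolding sesq_def using fin sub by (intro sum.cong refl sum.mono_neutral_right) (auto simp: w_def)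
  also have "\<dots> = sesq Y (\<lambda>a b. M (\<iota> a) (\<iota> b)) v v"
    unfolding sesq_def using inj by (simp add: sum.reindex w_def cong: sum.cong)
  finally show "Im (sesq Y (\<lambda>a b. M (\<iota> a) (\<iota> b)) v v) = 0 \<and> 0 \<le> Re (sesq Y (\<lambda>a b. M (\<iota> a) (\<iota> b)) v v)"
    using psd unfolding psd_on_def by metis
qed

lemma psd_on_subset: "psd_on X M \<Longrightarrow> finite X \<Longrightarrow> Y \<subseteq> X \<Longrightarrow> psd_on Y M"
  using psd_on_reindex[of X M id Y] by simp

lemma psd_on_zero_diag:
  assumes psd: "psd_on X M" and X: "finite X" "x \<in> X" "a \<in> X" and zero: "M x x = 0"
  shows "M x a = 0"
proof (rule ccontr)
  assume "M x a \<noteq> 0"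
  define q where "q = (cmod (M x a))\<^sup>2"
  define s where "s = (Re (M a a) + 1) / (2 * q)"
  define t where "t = - complex_of_real s * M x a"
  have q: "q > 0" "M x a * cnj (M x a) = q"
    using \<open>M x a \<noteq> 0\<close> unfolding q_def by (simp_all flip: complex_norm_square)
  let ?w = "\<lambda>y. ket a y + t * ket x y"
  have "sesq X M ?w ?w = M a a + t * M a x + cnj t * M x a + cnj t * t * M x x"
    using sesq_add_scaled[of X M "ket a" t "ket x"] sesq_ket_ket[OF X(1)] X by simp
  also have "\<dots> = M a a - 2 * complex_of_real (s * q)"
    using psd_on_hermitian[OF psd X(1,3,2)] zero q(2) unfolding t_def by (simp add: algebra_simps)
  finally have "Re (sesq X M ?w ?w) = Re (M a a) - 2 * s * q"
    by simp
  also have "\<dots> = -1"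
    using q(1) unfolding s_def by (simp add: field_simps)
  finally show False
    using psd unfolding psd_on_def by (metis neg_0_le_iff_le not_one_le_zero)
qed

lemma psd_on_schur_complement:
  assumes psd: "psd_on X M" and X: "finite X" "x \<in> X" and nonzero: "M x x \<noteq> 0"
  shows "psd_on X (\<lambda>a b. M a b - M a x * M x b / M x x)"
  unfolding psd_on_def
proof
  fix v
  define r where "r = M x x"
  define \<beta> where "\<beta> = sesq X M (ket x) v"
  define t where "t = - \<beta> / r"
  have r_real: "cnj r = r"
    using psd_on_diag[OF psd X] unfolding r_def by (simp add: complex_eq_iff)
  have "sesq X (\<lambda>a b. M a b - M a x * M x b / M x x) v v = sesq X M v v - sesq X M v (ket x) * \<beta> / r"
    unfolding \<beta>_def r_def sesq_ket_left[OF X] sesq_ket_right[OF X] unfolding sesq_def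
    by (simp add: algebra_simps sum_subtractf sum_divide_distrib sum_product) (rule sum.swap)
  also have "\<dots> = sesq X M (\<lambda>y. v y + t * ket x y) (\<lambda>y. v y + t * ket x y)"
    unfolding sesq_add_scaled sesq_ket_ket[OF X X(2)] \<beta>_def[symmetric] r_def[symmetric] t_def
    using nonzero r_real r_def by (simp add: field_simps)
  finally show "Im (sesq X (\<lambda>a b. M a b - M a x * M x b / M x x) v v) = 0 \<and>
      0 \<le> Re (sesq X (\<lambda>a b. M a b - M a x * M x b / M x x) v v)"
    using psd unfolding psd_on_def by metis
qed

definition tr_mult :: "'a set \<Rightarrow> ('a \<Rightarrow> 'a \<Rightarrow> complex) \<Rightarrow> ('a \<Rightarrow> 'a \<Rightarrow> complex) \<Rightarrow> complex" where
  "tr_mult X M \<rho> = (\<Sum>a\<in>X. \<Sum>b\<in>X. M a b * \<rho> b a)"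

lemma tr_mult_insert_zero:
  assumes "finite F" "x \<notin> F" "\<And>b. b \<in> insert x F \<Longrightarrow> \<rho> x b = 0 \<and> \<rho> b x = 0"
  shows "tr_mult (insert x F) M \<rho> = tr_mult F M \<rho>"
  using assms by (simp add: tr_mult_def)

(* A zero diagonal entry of \<rho> forces a zero row and column; otherwise \<rho> is its Schur complement
   at x (zero on row and column x) plus the rank-one kernel w w\<^sup>* / \<rho> x x, whose trace against M
   is a value of the quadratic form of M. *)
lemma tr_mult_psd_nonneg:
  assumes "finite X" "psd_on X \<rho>" "psd_on X M"
  shows "0 \<le> Re (tr_mult X M \<rho>)"
  using assms
proof (induction X arbitrary: \<rho> rule: finite_induct)
  case empty
  then show ?case by (simp add: tr_mult_def)
next
  case (insert x F)
  let ?X = "insert x F"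
  have fin: "finite ?X" and x: "x \<in> ?X"
    using insert.hyps by auto
  have M_F: "psd_on F M"
    using psd_on_subset[OF insert.prems(2) fin] by blast
  show ?case
  proof (cases "\<rho> x x = 0")
    case True
    have "\<rho> x b = 0 \<and> \<rho> b x = 0" if "b \<in> ?X" for b
      using psd_on_zero_diag[OF insert.prems(1) fin x that True]
        psd_on_hermitian[OF insert.prems(1) fin that x] by simp
    then have "tr_mult ?X M \<rho> = tr_mult F M \<rho>"
      using insert.hyps by (intro tr_mult_insert_zero)
    then show ?thesis
      using insert.IH[OF psd_on_subset[OF insert.prems(1) fin] M_F] by auto
  next
    case False
    define r where "r = \<rho> x x"
    define \<rho>' where "\<rho>' a b = \<rho> a b - \<rho> a x * \<rho> x b / r" for a b
    define w where "w b = \<rho> b x" for b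
    have r: "r = complex_of_real (Re r)" "Re r > 0"
      using psd_on_diag[OF insert.prems(1) fin x] False unfolding r_def
      by (auto simp: complex_eq_iff less_eq_real_def)
    have "\<rho>' x b = 0 \<and> \<rho>' b x = 0" for b
      using False unfolding \<rho>'_def r_def by simp
    then have "tr_mult ?X M \<rho>' = tr_mult F M \<rho>'"
      using insert.hyps by (intro tr_mult_insert_zero)
    moreover have "psd_on F \<rho>'"
      using psd_on_schur_complement[OF insert.prems(1) fin x False] psd_on_subset fin
      unfolding \<rho>'_def r_def by blast
    ultimately have "0 \<le> Re (tr_mult ?X M \<rho>')"
      using insert.IH M_F by simp
    moreover have "0 \<le> Re (sesq ?X M w w / r)"
    proof -
      have "0 \<le> Re (sesq ?X M w w)"
        using insert.prems(2) unfolding psd_on_def by blast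
      then show ?thesis
        using r by (metis Re_divide_of_real divide_nonneg_pos)
    qed
    moreover have "tr_mult ?X M \<rho> = tr_mult ?X M \<rho>' + sesq ?X M w w / r"
    proof -
      have "M a b * \<rho> b a = M a b * \<rho>' b a + cnj (w a) * M a b * w b / r" if "a \<in> ?X" for a b
        using psd_on_hermitian[OF insert.prems(1) fin x that] False
        unfolding \<rho>'_def w_def r_def by (simp add: field_simps)
      then show ?thesis
        unfolding tr_mult_def sesq_def by (simp add: sum.distrib sum_divide_distrib)
    qed
    ultimately show ?thesis by simp
  qed
qed

section \<open>Partial trace and measurements\<close>

definition qmerge :: "nat set \<Rightarrow> idx \<Rightarrow> idx \<Rightarrow> idx" where
  "qmerge A x z = (\<lambda>l. if l \<in> A then x l else z l)"

lemma finite_qbasis: "finite A \<Longrightarrow> finite (qbasis d A)"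
  unfolding qbasis_def by (intro finite_PiE) auto

lemma qmerge_in_qbasis:
  "A \<subseteq> R \<Longrightarrow> x \<in> qbasis d A \<Longrightarrow> z \<in> qbasis d (R - A) \<Longrightarrow> qmerge A x z \<in> qbasis d R"
  unfolding qbasis_def qmerge_def by (auto simp: PiE_iff extensional_def)

lemma restrict_qmerge:
  assumes "x \<in> qbasis d A" "z \<in> qbasis d (R - A)"
  shows "restrict (qmerge A x z) A = x" "restrict (qmerge A x z) (R - A) = z"
  using assms unfolding qbasis_def qmerge_def by (auto simp: PiE_iff extensional_def fun_eq_iff)

lemma qmerge_restrict: "w \<in> qbasis d R \<Longrightarrow> qmerge A (restrict w A) (restrict w (R - A)) = w"
  unfolding qbasis_def qmerge_def by (auto simp: PiE_iff extensional_def fun_eq_iff)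

lemma sum_qbasis_split:
  assumes "A \<subseteq> R"
  shows "(\<Sum>w\<in>qbasis d R. f w) = (\<Sum>x\<in>qbasis d A. \<Sum>z\<in>qbasis d (R - A). f (qmerge A x z))"
proof -
  have "(\<Sum>w\<in>qbasis d R. f w) = (\<Sum>(x, z)\<in>qbasis d A \<times> qbasis d (R - A). f (qmerge A x z))"
  proof (rule sum.reindex_bij_witness[where i = "\<lambda>(x, z). qmerge A x z"
        and j = "\<lambda>w. (restrict w A, restrict w (R - A))"])
    show "(restrict w A, restrict w (R - A)) \<in> qbasis d A \<times> qbasis d (R - A)" if "w \<in> qbasis d R" for w
      using that assms unfolding qbasis_def by auto
  qed (auto simp: qmerge_restrict restrict_qmerge qmerge_in_qbasis assms)
  then show ?thesis
    by (simp add: sum.cartesian_product)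
qed

lemma reduced_eq_sum_qmerge:
  "reduced d L A \<rho> = (\<lambda>x y. \<Sum>z\<in>qbasis d ({1..L} - A). \<rho> (qmerge A x z) (qmerge A y z))"
  unfolding reduced_def qmerge_def ..

lemma density_reduced:
  assumes A: "A \<subseteq> {1..L}" and \<rho>: "density d {1..L} \<rho>"
  shows "density d A (reduced d L A \<rho>)"
  unfolding density_def
proof
  have fin: "finite (qbasis d {1..L})"
    by (simp add: finite_qbasis)
  have "psd_on (qbasis d A) (\<lambda>x y. \<rho> (qmerge A x z) (qmerge A y z))" if "z \<in> qbasis d ({1..L} - A)" for z
  proof (rule psd_on_reindex[where \<iota> = "\<lambda>x. qmerge A x z" and M = \<rho>, OF _ fin])
    show "psd_on (qbasis d {1..L}) \<rho>"
      using \<rho> by (simp add: density_def qpsd_iff_psd_on)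
    show "inj_on (\<lambda>x. qmerge A x z) (qbasis d A)"
    proof (rule inj_onI)
      fix x y
      assume "x \<in> qbasis d A" "y \<in> qbasis d A" "qmerge A x z = qmerge A y z"
      then show "x = y"
        using restrict_qmerge(1)[OF _ that] by metis
    qed
    show "(\<lambda>x. qmerge A x z) ` qbasis d A \<subseteq> qbasis d {1..L}"
      using qmerge_in_qbasis[OF A _ that] by blast
  qed
  then show "qpsd d A (reduced d L A \<rho>)"
    unfolding qpsd_iff_psd_on reduced_eq_sum_qmerge by (rule psd_on_sum)
  have "qtrace d A (reduced d L A \<rho>) = qtrace d {1..L} \<rho>"
    unfolding qtrace_def reduced_eq_sum_qmerge sum_qbasis_split[OF A] ..
  then show "qtrace d A (reduced d L A \<rho>) = 1"
    using \<rho> by (simp add: density_def)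
qed

lemma qprob_nonneg:
  assumes "finite A" "qpsd d A M" "qpsd d A \<rho>"
  shows "0 \<le> qprob d A M \<rho>"
  using tr_mult_psd_nonneg[OF finite_qbasis[OF assms(1)]] assms(2,3)
  unfolding qprob_def tr_mult_def qpsd_iff_psd_on by blast

lemma qprob_sum: "qprob d A (\<lambda>a b. \<Sum>u\<in>T. H u a b) \<rho> = (\<Sum>u\<in>T. qprob d A (H u) \<rho>)"
proof -
  have "(\<Sum>a\<in>qbasis d A. \<Sum>b\<in>qbasis d A. (\<Sum>u\<in>T. H u a b) * \<rho> b a)
      = (\<Sum>a\<in>qbasis d A. \<Sum>u\<in>T. \<Sum>b\<in>qbasis d A. H u a b * \<rho> b a)"
    by (simp add: sum_distrib_right sum.swap[of _ "qbasis d A" T])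
  also have "\<dots> = (\<Sum>u\<in>T. \<Sum>a\<in>qbasis d A. \<Sum>b\<in>qbasis d A. H u a b * \<rho> b a)"
    by (rule sum.swap)
  finally show ?thesis
    unfolding qprob_def by (simp add: Re_sum)
qed

lemma sum_qprob_povm:
  assumes "povm d A X M" "finite A"
  shows "(\<Sum>x\<in>X. qprob d A (M x) \<rho>) = Re (qtrace d A \<rho>)"
proof -
  have "(\<Sum>x\<in>X. qprob d A (M x) \<rho>) = qprob d A (\<lambda>a b. \<Sum>x\<in>X. M x a b) \<rho>"
    by (rule qprob_sum[symmetric])
  also have "\<dots> = Re (\<Sum>a\<in>qbasis d A. \<Sum>b\<in>qbasis d A. if a = b then \<rho> b a else 0)"
    using assms(1) unfolding qprob_def povm_def by (intro arg_cong[where f = Re] sum.cong refl) simp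
  also have "\<dots> = Re (qtrace d A \<rho>)"
    using finite_qbasis[OF assms(2)] by (simp add: qtrace_def)
  finally show ?thesis .
qed

definition coarse_grain :: "('x \<Rightarrow> 'y) \<Rightarrow> 'x set \<Rightarrow> ('x \<Rightarrow> qop) \<Rightarrow> 'y \<Rightarrow> qop" where
  "coarse_grain \<pi> X M y = (\<lambda>a b. \<Sum>x\<in>{x\<in>X. \<pi> x = y}. M x a b)"

lemma povm_coarse_grain:
  assumes M: "povm d A X M" and \<pi>: "\<pi> ` X \<subseteq> Y" and Y: "finite Y"
  shows "povm d A Y (coarse_grain \<pi> X M)"
  unfolding povm_def
proof (intro conjI ballI)
  show "finite Y" by (rule Y)
  show "qpsd d A (coarse_grain \<pi> X M y)" for y
    using M unfolding povm_def coarse_grain_def qpsd_iff_psd_on by (intro psd_on_sum) auto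
  fix a b
  assume "a \<in> qbasis d A" "b \<in> qbasis d A"
  moreover have "(\<Sum>y\<in>Y. coarse_grain \<pi> X M y a b) = (\<Sum>x\<in>X. M x a b)"
    unfolding coarse_grain_def using M \<pi> Y by (intro sum.group) (auto simp: povm_def)
  ultimately show "(\<Sum>y\<in>Y. coarse_grain \<pi> X M y a b) = (if a = b then 1 else 0)"
    using M unfolding povm_def by simp
qed

lemma qprob_povm_nonneg:
  assumes "povm d A X M" "finite A" "density d A \<rho>" "x \<in> X"
  shows "0 \<le> qprob d A (M x) \<rho>"
  using assms by (intro qprob_nonneg) (auto simp: povm_def density_def)

lemma sum_qprob_povm_le_1:
  assumes M: "povm d A X M" and A: "finite A" and \<rho>: "density d A \<rho>" and "Y \<subseteq> X"
  shows "(\<Sum>x\<in>Y. qprob d A (M x) \<rho>) \<le> 1"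
proof -
  have "(\<Sum>x\<in>Y. qprob d A (M x) \<rho>) \<le> (\<Sum>x\<in>X. qprob d A (M x) \<rho>)"
    using assms qprob_povm_nonneg[OF M A \<rho>] by (intro sum_mono2) (auto simp: povm_def)
  also have "\<dots> = 1"
    using sum_qprob_povm[OF M A] \<rho> by (simp add: density_def)
  finally show ?thesis .
qed

lemma coarse_grain_error_le:
  assumes M: "povm d A X M" and A: "finite A" and \<rho>: "density d A \<rho>"
    and \<pi>: "\<pi> ` X \<subseteq> Y" "finite Y" and x: "x \<in> X" "\<pi> x = y"
  shows "(\<Sum>y'\<in>Y - {y}. qprob d A (coarse_grain \<pi> X M y') \<rho>) \<le> (\<Sum>x'\<in>X - {x}. qprob d A (M x') \<rho>)"
proof -
  have X: "finite X"
    using M by (simp add: povm_def)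
  have "(\<Sum>y'\<in>Y - {y}. qprob d A (coarse_grain \<pi> X M y') \<rho>) =
      (\<Sum>y'\<in>Y - {y}. \<Sum>x'\<in>{x'\<in>{x'\<in>X. \<pi> x' \<noteq> y}. \<pi> x' = y'}. qprob d A (M x') \<rho>)"
    unfolding coarse_grain_def qprob_sum by (intro sum.cong) auto
  also have "\<dots> = (\<Sum>x'\<in>{x'\<in>X. \<pi> x' \<noteq> y}. qprob d A (M x') \<rho>)"
    using X \<pi> by (intro sum.group) auto
  also have "\<dots> \<le> (\<Sum>x'\<in>X - {x}. qprob d A (M x') \<rho>)"
    using X x qprob_povm_nonneg[OF M A \<rho>] by (intro sum_mono2) auto
  finally show ?thesis .
qed

section \<open>Blocks inside the fibres of a group homomorphism\<close>

lemma card_eq_sum_card_fibres: "finite U \<Longrightarrow> card U = (\<Sum>y\<in>g ` U. card {u\<in>U. g u = y})"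
  using sum.group[of U "g ` U" g "\<lambda>_. 1 :: nat"] by simp

lemma fibrewise_product_bij:
  assumes fin: "finite C" "finite S" "finite U"
    and card_C: "card C = card (g ` U) * t"
    and card_fibre: "\<And>y. y \<in> g ` U \<Longrightarrow> card {u\<in>U. g u = y} = t * card S"
  obtains B \<phi> where "bij_betw B (C \<times> S) U" "\<And>c s. c \<in> C \<Longrightarrow> s \<in> S \<Longrightarrow> g (B (c, s)) = \<phi> c"
proof -
  have "\<exists>\<beta>. bij_betw \<beta> C (g ` U \<times> {..<t})"
    using card_C fin by (intro finite_same_card_bij) (auto simp: card_cartesian_product)
  then obtain \<beta> where \<beta>: "bij_betw \<beta> C (g ` U \<times> {..<t})"
    by blast
  have "\<forall>y\<in>g ` U. \<exists>f. bij_betw f ({..<t} \<times> S) {u\<in>U. g u = y}"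
    using card_fibre fin by (auto intro!: finite_same_card_bij simp: card_cartesian_product)
  then obtain f where f: "\<And>y. y \<in> g ` U \<Longrightarrow> bij_betw (f y) ({..<t} \<times> S) {u\<in>U. g u = y}"
    by metis
  define B where "B = (\<lambda>(c, s). f (fst (\<beta> c)) (snd (\<beta> c), s))"
  have \<beta>_in: "fst (\<beta> c) \<in> g ` U" "snd (\<beta> c) < t" if "c \<in> C" for c
    using bij_betw_apply[OF \<beta> that] by auto
  have B_fibre: "B (c, s) \<in> U \<and> g (B (c, s)) = fst (\<beta> c)" if "c \<in> C" "s \<in> S" for c s
    using bij_betw_apply[OF f[OF \<beta>_in(1)[OF that(1)]], of "(snd (\<beta> c), s)"] \<beta>_in[OF that(1)] that(2)
    unfolding B_def by auto
  have "inj_on B (C \<times> S)"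
  proof (rule inj_onI, clarify)
    fix c s c' s'
    assume cs: "c \<in> C" "s \<in> S" "c' \<in> C" "s' \<in> S" and eq: "B (c, s) = B (c', s')"
    have same_fibre: "fst (\<beta> c) = fst (\<beta> c')"
      using B_fibre cs eq by metis
    then have "(snd (\<beta> c), s) = (snd (\<beta> c'), s')"
      using eq inj_onD[OF bij_betw_imp_inj_on[OF f[OF \<beta>_in(1)[OF cs(1)]]]] \<beta>_in cs
      unfolding B_def by auto
    then show "c = c' \<and> s = s'"
      using same_fibre bij_betw_imp_inj_on[OF \<beta>] cs by (auto simp: prod_eq_iff inj_on_def)
  qed
  moreover have "B ` (C \<times> S) \<subseteq> U"
    using B_fibre by auto
  moreover have "card (C \<times> S) = card U"
    using card_eq_sum_card_fibres[OF fin(3), of g] card_fibre card_C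
    by (simp add: card_cartesian_product)
  ultimately have "bij_betw B (C \<times> S) U"
    using fin by (metis bij_betw_def card_image card_subset_eq)
  then show ?thesis
    using B_fibre by (intro that[of B "\<lambda>c. fst (\<beta> c)"]) simp_all
qed

lemma card_subgroup_dvd:
  fixes R :: "'a::{finite, ab_group_add} set"
  assumes zero: "0 \<in> R" and diff: "\<And>a b. a \<in> R \<Longrightarrow> b \<in> R \<Longrightarrow> a - b \<in> R"
  shows "card R dvd CARD('a)"
proof -
  define r where "r = {(a, b). a - b \<in> R}"
  have neg: "- a \<in> R" if "a \<in> R" for a
    using diff[OF zero that] by simp
  have "equiv UNIV r"
  proof (rule equivI)
    show "refl r"
      using zero by (simp add: refl_on_def r_def)
    show "sym r"
      unfolding sym_def r_def using neg by (metis case_prodD case_prodI mem_Collect_eq minus_diff_eq)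
    show "trans r"
      unfolding trans_def r_def
    proof clarify
      fix a b c
      assume "a - b \<in> R" "b - c \<in> R"
      then have "(a - b) - - (b - c) \<in> R"
        using diff neg by blast
      then show "a - c \<in> R"
        by simp
    qed
  qed simp
  moreover have "card X = card R" if X_class: "X \<in> UNIV // r" for X
  proof -
    obtain a where X: "X = {b. a - b \<in> R}"
      using X_class by (auto simp: quotient_def r_def)
    have "X = (\<lambda>c. a - c) ` R"
    proof
      show "X \<subseteq> (\<lambda>c. a - c) ` R"
        using X by (auto intro: image_eqI[where x = "a - _"])
      show "(\<lambda>c. a - c) ` R \<subseteq> X"
        using X by auto
    qed
    then show ?thesis
      by (simp add: card_image inj_on_def)
  qed
  ultimately show ?thesis
    using equiv_imp_dvd_card[of UNIV r "card R"] by auto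
qed

lemma card_fibre_hom:
  fixes g :: "'a::ab_group_add \<Rightarrow> 'b::ab_group_add"
  assumes hom: "\<And>x y. g (x - y) = g x - g y"
  shows "card {u. g u = g u0} = card {u. g u = 0}"
proof -
  have add: "g (x + y) = g x + g y" for x y
    using hom[of "x + y" y] by (simp add: eq_diff_eq)
  have "{u. g u = g u0} = (\<lambda>k. u0 + k) ` {u. g u = 0}"
  proof
    show "{u. g u = g u0} \<subseteq> (\<lambda>k. u0 + k) ` {u. g u = 0}"
      using hom by (auto intro: image_eqI[where x = "_ - u0"])
    show "(\<lambda>k. u0 + k) ` {u. g u = 0} \<subseteq> {u. g u = g u0}"
      using add by auto
  qed
  then show ?thesis
    by (simp add: card_image)
qed

lemma hom_fibrewise_product_bij:
  fixes g :: "'a::{finite, ab_group_add} \<Rightarrow> 'b::{finite, ab_group_add}"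
  assumes hom: "\<And>x y. g (x - y) = g x - g y" and card_S: "card S * CARD('b) = CARD('a)"
  obtains B \<phi> where "bij_betw B ((UNIV :: 'b set) \<times> S) UNIV" "\<And>c s. s \<in> S \<Longrightarrow> g (B (c, s)) = \<phi> c"
proof -
  define K where "K = {u. g u = 0}"
  have fibre: "card {u. g u = y} = card K" if "y \<in> range g" for y
    using card_fibre_hom[OF hom] that unfolding K_def by blast
  have g0: "g 0 = 0"
    using hom[of 0 0] by simp
  have "card (range g) dvd CARD('b)"
  proof (rule card_subgroup_dvd)
    show "0 \<in> range g"
      using g0 by (metis rangeI)
    show "a - b \<in> range g" if "a \<in> range g" "b \<in> range g" for a b
      using that by (auto simp flip: hom)
  qed
  then obtain t where t: "CARD('b) = card (range g) * t"
    by (rule dvdE)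
  have "CARD('a) = card (range g) * card K"
    using card_eq_sum_card_fibres[of "UNIV :: 'a set" g] fibre by simp
  moreover have "card (range g) > 0"
    by (simp add: card_gt_0_iff)
  ultimately have K: "card K = t * card S"
    using card_S t by (simp add: ac_simps)
  have "card S > 0"
    using card_S by (metis gr0I mult_is_0 zero_less_card_finite less_irrefl finite_UNIV)
  then have "finite S"
    by (rule card_ge_0_finite)
  show ?thesis
  proof (rule fibrewise_product_bij[of "UNIV :: 'b set" S "UNIV :: 'a set" g t])
    fix B \<phi>
    assume "bij_betw B ((UNIV :: 'b set) \<times> S) UNIV" "\<And>c s. c \<in> UNIV \<Longrightarrow> s \<in> S \<Longrightarrow> g (B (c, s)) = \<phi> c"
    then show thesis
      by (intro that[of B \<phi>]) simp_all
  qed (use \<open>finite S\<close> t fibre K in auto)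
qed

section \<open>Averaging the decoding error\<close>

lemma sum_uniform_product_bij:
  assumes B: "bij_betw B (C \<times> S) U" and fin: "finite C" "finite S"
  shows "(\<Sum>c\<in>C. (1 / real (card C)) * (\<Sum>s\<in>S. (1 / real (card S)) * f (B (c, s)))) =
    (\<Sum>u\<in>U. (1 / real (card U)) * f u)"
proof -
  have "card U = card C * card S"
    using bij_betw_same_card[OF B] by (simp add: card_cartesian_product)
  then have "(\<Sum>c\<in>C. (1 / real (card C)) * (\<Sum>s\<in>S. (1 / real (card S)) * f (B (c, s)))) =
      (1 / real (card U)) * (\<Sum>p\<in>C \<times> S. f (B p))"
    by (simp add: sum_distrib_left sum.cartesian_product sum_divide_distrib)
  also have "\<dots> = (\<Sum>u\<in>U. (1 / real (card U)) * f u)"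
    by (simp add: sum.reindex_bij_betw[OF B] sum_distrib_left)
  finally show ?thesis .
qed

lemma sum_mult_le_vdist:
  fixes p q a :: "'a::finite \<Rightarrow> real"
  assumes "\<And>x. 0 \<le> a x" "\<And>x. a x \<le> 1"
  shows "(\<Sum>x\<in>UNIV. q x * a x) \<le> (\<Sum>x\<in>UNIV. p x * a x) + vdist p q"
proof -
  have "q x * a x \<le> p x * a x + \<bar>p x - q x\<bar>" for x
  proof -
    have "(q x - p x) * a x \<le> \<bar>p x - q x\<bar> * a x"
      using assms by (intro mult_right_mono) auto
    also have "\<dots> \<le> \<bar>p x - q x\<bar>"
      using assms(2) by (simp add: mult_left_le)
    finally show ?thesis
      by (simp add: algebra_simps)
  qed
  then show ?thesis
    unfolding vdist_def by (simp add: sum.distrib[symmetric] sum_mono)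
qed

lemma uniform_average_error_le:
  fixes err :: "'u::finite \<Rightarrow> real" and e :: "'c::finite \<Rightarrow> 's \<Rightarrow> real"
  assumes B: "bij_betw B ((UNIV :: 'c set) \<times> S) (UNIV :: 'u set)" and S: "finite S"
    and e: "\<And>c s. s \<in> S \<Longrightarrow> e c s \<le> err (B (c, s))"
    and err: "\<And>u. 0 \<le> err u" "\<And>u. err u \<le> 1"
  shows "(\<Sum>c\<in>UNIV. (1 / real CARD('c)) * (\<Sum>s\<in>S. (1 / real (card S)) * e c s))
    \<le> (\<Sum>u\<in>UNIV. p u * err u) + vdist p (\<lambda>u. 1 / real CARD('u))"
proof -
  have "(\<Sum>c\<in>UNIV. (1 / real CARD('c)) * (\<Sum>s\<in>S. (1 / real (card S)) * e c s))
      \<le> (\<Sum>c\<in>UNIV. (1 / real CARD('c)) * (\<Sum>s\<in>S. (1 / real (card S)) * err (B (c, s))))"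
    using e by (intro sum_mono mult_left_mono) auto
  also have "\<dots> = (\<Sum>u\<in>UNIV. (1 / real CARD('u)) * err u)"
    using sum_uniform_product_bij[OF B] S by simp
  also have "\<dots> \<le> (\<Sum>u\<in>UNIV. p u * err u) + vdist p (\<lambda>u. 1 / real CARD('u))"
    using err by (rule sum_mult_le_vdist)
  finally show ?thesis .
qed

theorem lemma3:
  fixes L :: nat and d :: "nat \<Rightarrow> nat"
    and \<rho> :: "'f::{finite,field} ^ 'n \<Rightarrow> qop"
    and AA :: "nat set set"
    and P :: "'f ^ 'n \<Rightarrow> real"
    and g :: "'f ^ 'n \<Rightarrow> 'f ^ 'm"
    and h :: "nat set \<Rightarrow> 'f ^ 'm \<Rightarrow> 'f ^ 'n \<Rightarrow> qop"
    and S :: "'s set"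
    and eps1 eps2 :: real
  assumes dims: "\<forall>l\<in>{1..L}. d l \<ge> 1"
    and channel: "\<forall>u. density d {1..L} (\<rho> u)"
    and AA_sub: "\<forall>A\<in>AA. A \<subseteq> {1..L}"
    and P_nonneg: "\<forall>u. P u \<ge> 0"
    and P_sum: "(\<Sum>u\<in>UNIV. P u) = 1"
    and P_close: "vdist P (\<lambda>u. 1 / real CARD('f ^ 'n)) \<le> eps1"
    and g_linear: "Vector_Spaces.linear ((*s) :: 'f \<Rightarrow> 'f ^ 'n \<Rightarrow> 'f ^ 'n) ((*s) :: 'f \<Rightarrow> 'f ^ 'm \<Rightarrow> 'f ^ 'm) g"
    and h_povm: "\<forall>A\<in>AA. \<forall>c. povm d A (UNIV :: ('f ^ 'n) set) (h A c)"
    and h_err: "\<forall>A\<in>AA. (\<Sum>u\<in>UNIV. P u *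
                  (\<Sum>u'\<in>UNIV - {u}. qprob d A (h A (g u) u') (reduced d L A (\<rho> u)))) \<le> eps2"
    and S_card: "real (card S) = real CARD('f ^ 'n) / real CARD('f ^ 'm)"
  shows "\<exists>(Enc :: 'f ^ 'm \<Rightarrow> 's \<Rightarrow> 'f ^ 'n) (Dec :: 'f ^ 'm \<Rightarrow> nat set \<Rightarrow> 's \<Rightarrow> qop).
           (\<forall>c. \<forall>A\<in>AA. povm d A S (Dec c A)) \<and>
           (\<forall>A\<in>AA. (\<Sum>c\<in>UNIV. (1 / real CARD('f ^ 'm)) *
               (\<Sum>s\<in>S. (1 / real (card S)) *
                  (\<Sum>s'\<in>S - {s}. qprob d A (Dec c A s') (reduced d L A (\<rho> (Enc c s))))))
             \<le> eps1 + eps2)"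
proof -
  have g_hom: "g (x - y) = g x - g y" for x y
    using g_linear module_hom.diff unfolding Vector_Spaces.linear_def by blast
  have "real (card S * CARD('f ^ 'm)) = real CARD('f ^ 'n)"
    using S_card by (simp add: field_simps)
  then obtain B \<phi> where B: "bij_betw B ((UNIV :: ('f ^ 'm) set) \<times> S) UNIV"
    and gB: "\<And>c s. s \<in> S \<Longrightarrow> g (B (c, s)) = \<phi> c"
    using hom_fibrewise_product_bij[OF g_hom] of_nat_eq_iff by metis
  have S: "finite S"
    using bij_betw_finite[OF B] by (auto dest: finite_cartesian_productD2)
  \<comment> \<open>The decoder ignores \<open>c\<close>: it reports the position of the decoded vector within its block.\<close>
  define \<pi> where "\<pi> u = snd (inv_into (UNIV \<times> S) B u)" for u
  have \<pi>: "\<pi> ` UNIV \<subseteq> S" "\<And>c s. s \<in> S \<Longrightarrow> \<pi> (B (c, s)) = s"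
    unfolding \<pi>_def using bij_betw_apply[OF bij_betw_inv_into[OF B] UNIV_I] bij_betw_inv_into_left[OF B]
    by (auto simp: mem_Times_iff)
  define Dec where "Dec c A = coarse_grain \<pi> UNIV (h A (\<phi> c))" for c A
  define err where "err A u = (\<Sum>u'\<in>UNIV - {u}. qprob d A (h A (g u) u') (reduced d L A (\<rho> u)))" for A u
  show ?thesis
  proof (intro exI[of _ "\<lambda>c s. B (c, s)"] exI[of _ Dec] conjI allI ballI)
    show "povm d A S (Dec c A)" if "A \<in> AA" for c A
      unfolding Dec_def using h_povm that \<pi> S by (intro povm_coarse_grain) auto
    fix A
    assume A: "A \<in> AA"
    have fin: "finite A"
      using A AA_sub finite_subset by blast
    have h_A: "povm d A UNIV (h A c)" for c
      using h_povm A by blast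
    have red: "density d A (reduced d L A (\<rho> u))" for u
      using density_reduced A AA_sub channel by blast
    have "(\<Sum>s'\<in>S - {s}. qprob d A (Dec c A s') (reduced d L A (\<rho> (B (c, s))))) \<le> err A (B (c, s))"
      if "s \<in> S" for c s
      unfolding Dec_def err_def gB[OF that] using coarse_grain_error_le[OF h_A fin red \<pi>(1) S UNIV_I \<pi>(2)[OF that]] .
    moreover have "0 \<le> err A u" "err A u \<le> 1" for u
      unfolding err_def using qprob_povm_nonneg[OF h_A fin red] sum_qprob_povm_le_1[OF h_A fin red]
      by (simp_all add: sum_nonneg)
    ultimately have "(\<Sum>c\<in>UNIV. (1 / real CARD('f ^ 'm)) * (\<Sum>s\<in>S. (1 / real (card S)) *
            (\<Sum>s'\<in>S - {s}. qprob d A (Dec c A s') (reduced d L A (\<rho> (B (c, s)))))))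
        \<le> (\<Sum>u\<in>UNIV. P u * err A u) + vdist P (\<lambda>u. 1 / real CARD('f ^ 'n))" (is "?average \<le> _")
      by (rule uniform_average_error_le[OF B S, where err = "err A"])
    also have "\<dots> \<le> eps1 + eps2"
      using h_err A P_close unfolding err_def by fastforce
    finally show "?average \<le> eps1 + eps2" .
  qed
qed

end
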